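(* Let $\mathbf A$ be a residuated semigroup satisfying $xx=x$ and $x\backslash x=y/y$ for all $x,y$. Then the element $1:=a\backslash a$ does not depend on $a$, it is the greatest element and a global identity of $\mathbf A$; $\langle A,\le\rangle$ is a meet-semilattice whose meet is $x\wedge y=xy$; and $x\wedge y\le z\iff y\le x\backslash z$ for all $x,y,z$, so $\langle A,\wedge,\backslash,1\rangle$ is a Brouwerian semilattice. In particular, every integrally closed residuated monoid satisfying $xx=x$ is a Brouwerian semilattice in this way.
   Context: A residuated semigroup is a structure $\langle A,\le,\cdot,\backslash,/\rangle$ where $\langle A,\le\rangle$ is a poset, $\langle A,\cdot\rangle$ is a semigroup, and $xy\le z\iff x\le z/y\iff y\le x\backslash z$. A residuated monoid is a residuated semigroup with a global identity $1$ ($1a=a=a1$); it is integrally closed if $x\backslash x=1$ for all $x$. A Brouwerian semilattice is a meet-semilattice $\langle A,\wedge\rangle$ with top element $1$ and a binary operation $\to$ such that $x\wedge y\le z\iff y\le x\to z$. *)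

theory Defs
  imports Main
begin

definition poset :: "('a \<Rightarrow> 'a \<Rightarrow> bool) \<Rightarrow> bool" where
  "poset le \<longleftrightarrow> (\<forall>x. le x x) \<and> (\<forall>x y. le x y \<and> le y x \<longrightarrow> x = y)
     \<and> (\<forall>x y z. le x y \<and> le y z \<longrightarrow> le x z)"

definition residuated_semigroup ::
  "('a \<Rightarrow> 'a \<Rightarrow> bool) \<Rightarrow> ('a \<Rightarrow> 'a \<Rightarrow> 'a) \<Rightarrow> ('a \<Rightarrow> 'a \<Rightarrow> 'a) \<Rightarrow> ('a \<Rightarrow> 'a \<Rightarrow> 'a) \<Rightarrow> bool" where
  "residuated_semigroup le mult ldiv rdiv \<longleftrightarrow> poset le
     \<and> (\<forall>x y z. mult (mult x y) z = mult x (mult y z))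
     \<and> (\<forall>x y z. (le (mult x y) z \<longleftrightarrow> le x (rdiv z y)) \<and> (le (mult x y) z \<longleftrightarrow> le y (ldiv x z)))"

definition residuated_monoid ::
  "('a \<Rightarrow> 'a \<Rightarrow> bool) \<Rightarrow> ('a \<Rightarrow> 'a \<Rightarrow> 'a) \<Rightarrow> ('a \<Rightarrow> 'a \<Rightarrow> 'a) \<Rightarrow> ('a \<Rightarrow> 'a \<Rightarrow> 'a) \<Rightarrow> 'a \<Rightarrow> bool" where
  "residuated_monoid le mult ldiv rdiv one \<longleftrightarrow> residuated_semigroup le mult ldiv rdiv
     \<and> (\<forall>a. mult one a = a \<and> mult a one = a)"

definition integrally_closed ::
  "('a \<Rightarrow> 'a \<Rightarrow> 'a) \<Rightarrow> 'a \<Rightarrow> bool" where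
  "integrally_closed ldiv one \<longleftrightarrow> (\<forall>x. ldiv x x = one)"

definition meet_semilattice :: "('a \<Rightarrow> 'a \<Rightarrow> bool) \<Rightarrow> ('a \<Rightarrow> 'a \<Rightarrow> 'a) \<Rightarrow> bool" where
  "meet_semilattice le meet \<longleftrightarrow> poset le
     \<and> (\<forall>x y. le (meet x y) x \<and> le (meet x y) y)
     \<and> (\<forall>x y z. le z x \<and> le z y \<longrightarrow> le z (meet x y))"

definition brouwerian_semilattice ::
  "('a \<Rightarrow> 'a \<Rightarrow> bool) \<Rightarrow> ('a \<Rightarrow> 'a \<Rightarrow> 'a) \<Rightarrow> ('a \<Rightarrow> 'a \<Rightarrow> 'a) \<Rightarrow> 'a \<Rightarrow> bool" where
  "brouwerian_semilattice le meet imp tp \<longleftrightarrow> meet_semilattice le meet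
     \<and> (\<forall>x. le x tp)
     \<and> (\<forall>x y z. le (meet x y) z \<longleftrightarrow> le y (imp x z))"

end

theory Submission
  imports Defs
begin

text \<open>Idempotence turns \<open>x x \<le> x\<close> into \<open>x \<le> x\<backslash>x\<close>, so if all the divisions
  \<open>x\<backslash>x\<close> and \<open>y/y\<close> coincide, their common value \<open>1\<close> is the top element.  Residuating
  \<open>x\<backslash>x \<le> x\<backslash>x\<close> and \<open>x/x \<le> x/x\<close> gives \<open>x 1 \<le> x\<close> and \<open>1 x \<le> x\<close>, while
  \<open>x = x x \<le> x 1\<close> and \<open>x \<le> 1 x\<close> by monotonicity; thus \<open>1\<close> is an identity.  In an
  idempotent monoid whose identity is the top, monotonicity makes \<open>x y \<le> x 1 = x\<close>,
  \<open>x y \<le> y\<close>, and \<open>z = z z \<le> x y\<close> for every common lower bound \<open>z\<close>, so multiplication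
  is the meet and the left residual is the Brouwerian implication.\<close>

locale idempotent_residuated_semigroup =
  fixes le :: "'a \<Rightarrow> 'a \<Rightarrow> bool" and mult ldiv rdiv :: "'a \<Rightarrow> 'a \<Rightarrow> 'a"
  assumes residuated: "residuated_semigroup le mult ldiv rdiv"
    and mult_idem: "mult x x = x"
begin

lemma poset: "poset le"
  using residuated unfolding residuated_semigroup_def by blast

lemma le_refl: "le x x"
  using poset unfolding poset_def by blast

lemma le_antisym: "le x y \<Longrightarrow> le y x \<Longrightarrow> x = y"
  using poset unfolding poset_def by blast

lemma le_trans: "le x y \<Longrightarrow> le y z \<Longrightarrow> le x z"
  using poset unfolding poset_def by blast

lemma mult_le_iff_le_rdiv: "le (mult x y) z \<longleftrightarrow> le x (rdiv z y)"
  using residuated unfolding residuated_semigroup_def by blast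

lemma mult_le_iff_le_ldiv: "le (mult x y) z \<longleftrightarrow> le y (ldiv x z)"
  using residuated unfolding residuated_semigroup_def by blast

lemma mult_mono:
  assumes "le x x'" and "le y y'"
  shows "le (mult x y) (mult x' y')"
proof -
  have "le y' (ldiv x' (mult x' y'))"
    using le_refl mult_le_iff_le_ldiv by blast
  then have "le (mult x' y) (mult x' y')"
    using assms(2) le_trans mult_le_iff_le_ldiv by blast
  then have "le x' (rdiv (mult x' y') y)"
    using mult_le_iff_le_rdiv by blast
  then show ?thesis
    using assms(1) le_trans mult_le_iff_le_rdiv by blast
qed

lemma le_ldiv_self: "le x (ldiv x x)"
  using mult_le_iff_le_ldiv le_refl mult_idem by metis

lemma unit_if_divisions_self_eq:
  assumes ldiv_one: "\<And>x. ldiv x x = one" and rdiv_one: "\<And>x. rdiv x x = one"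
  shows "mult one x = x \<and> mult x one = x"
proof -
  have top: "le x one"
    using le_ldiv_self ldiv_one by metis
  have "le (mult x one) x" and "le (mult one x) x"
    using le_refl mult_le_iff_le_ldiv mult_le_iff_le_rdiv ldiv_one rdiv_one by metis+
  moreover have "le x (mult x one)" and "le x (mult one x)"
    using mult_mono[OF le_refl top] mult_mono[OF top le_refl] mult_idem by metis+
  ultimately show ?thesis
    using le_antisym by blast
qed

context
  fixes one
  assumes le_one: "\<And>x. le x one" and mult_one: "\<And>x. mult one x = x \<and> mult x one = x"
begin

lemma meet_semilattice_mult: "meet_semilattice le mult"
proof -
  have "le (mult x y) x" and "le (mult x y) y" for x y
    using mult_mono[OF le_refl le_one] mult_mono[OF le_one le_refl] mult_one by metis+
  moreover have "le z (mult x y)" if "le z x" and "le z y" for x y z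
    using mult_mono[OF that] mult_idem by metis
  ultimately show ?thesis
    unfolding meet_semilattice_def using poset by blast
qed

lemma brouwerian_semilattice_mult_ldiv: "brouwerian_semilattice le mult ldiv one"
  unfolding brouwerian_semilattice_def
  using meet_semilattice_mult le_one mult_le_iff_le_ldiv by blast

end

end

theorem corollary7p3:
  shows
  "(\<forall>(le :: 'a \<Rightarrow> 'a \<Rightarrow> bool) mult ldiv rdiv.
      residuated_semigroup le mult ldiv rdiv
      \<and> (\<forall>x. mult x x = x) \<and> (\<forall>x y. ldiv x x = rdiv y y)
      \<longrightarrow> (\<exists>one. (\<forall>a. ldiv a a = one)
             \<and> (\<forall>x. le x one)
             \<and> (\<forall>x. mult one x = x \<and> mult x one = x)
             \<and> meet_semilattice le mult
             \<and> (\<forall>x y z. le (mult x y) z \<longleftrightarrow> le y (ldiv x z))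
             \<and> brouwerian_semilattice le mult ldiv one))
   \<and> (\<forall>(le :: 'a \<Rightarrow> 'a \<Rightarrow> bool) mult ldiv rdiv one.
      residuated_monoid le mult ldiv rdiv one \<and> integrally_closed ldiv one
      \<and> (\<forall>x. mult x x = x)
      \<longrightarrow> brouwerian_semilattice le mult ldiv one)"
proof (intro conjI allI impI)
  fix le :: "'a \<Rightarrow> 'a \<Rightarrow> bool" and mult ldiv rdiv
  assume assms: "residuated_semigroup le mult ldiv rdiv
      \<and> (\<forall>x. mult x x = x) \<and> (\<forall>x y. ldiv x x = rdiv y y)"
  then interpret idempotent_residuated_semigroup le mult ldiv rdiv
    by unfold_locales blast+
  have divisions_eq: "ldiv x x = rdiv y y" for x y
    using assms by blast
  define one where "one = ldiv undefined undefined"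
  have ldiv_one: "ldiv x x = one" and rdiv_one: "rdiv x x = one" for x
    using divisions_eq unfolding one_def by metis+
  have le_one: "le x one" for x
    using le_ldiv_self ldiv_one by metis
  note mult_one = unit_if_divisions_self_eq[OF ldiv_one rdiv_one]
  show "\<exists>one. (\<forall>a. ldiv a a = one) \<and> (\<forall>x. le x one)
             \<and> (\<forall>x. mult one x = x \<and> mult x one = x) \<and> meet_semilattice le mult
             \<and> (\<forall>x y z. le (mult x y) z \<longleftrightarrow> le y (ldiv x z))
             \<and> brouwerian_semilattice le mult ldiv one"
    using ldiv_one le_one mult_one mult_le_iff_le_ldiv
      meet_semilattice_mult[OF le_one mult_one]
      brouwerian_semilattice_mult_ldiv[OF le_one mult_one] by blast
next
  fix le :: "'a \<Rightarrow> 'a \<Rightarrow> bool" and mult ldiv rdiv one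
  assume assms: "residuated_monoid le mult ldiv rdiv one \<and> integrally_closed ldiv one
      \<and> (\<forall>x. mult x x = x)"
  then interpret idempotent_residuated_semigroup le mult ldiv rdiv
    by unfold_locales (auto simp: residuated_monoid_def)
  have le_one: "le x one" for x
    using le_ldiv_self assms unfolding integrally_closed_def by metis
  show "brouwerian_semilattice le mult ldiv one"
    using brouwerian_semilattice_mult_ldiv[OF le_one] assms
    unfolding residuated_monoid_def by blast
qed

end
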